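(* Let $A$ and $B$ be isoclinic finite groups. If $A$ is weakly-top, then $B$ is weakly-top. If $A$ is top, then $B$ is top.
   Context: For a group $H$, $H'$ denotes its commutator subgroup and $Z(H)$ its center. A finite group $G$ is weakly-top if $|H/H'| \leq |G/G'|$ for every proper subgroup $H<G$, and top if $|H/H'| < |G/G'|$ for every proper subgroup $H<G$. In every group $G$ the commutator map induces a well-defined surjective map $\theta_G : G/Z(G) \times G/Z(G) \to G'$, $(xZ(G),yZ(G)) \mapsto [x,y]=x^{-1}y^{-1}xy$. Two groups $A$ and $B$ are isoclinic (in the sense of P. Hall) if there exist isomorphisms $\phi : A' \to B'$ and $\psi : A/Z(A) \to B/Z(B)$ such that $\phi(\theta_A(u,v)) = \theta_B(\psi(u),\psi(v))$ for all $u,v \in A/Z(A)$. *)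

theory Defs
  imports "HOL-Algebra.Algebra"
begin

definition comm :: "('a, 'b) monoid_scheme \<Rightarrow> 'a \<Rightarrow> 'a \<Rightarrow> 'a" where
  "comm G x y = inv\<^bsub>G\<^esub> x \<otimes>\<^bsub>G\<^esub> inv\<^bsub>G\<^esub> y \<otimes>\<^bsub>G\<^esub> x \<otimes>\<^bsub>G\<^esub> y"

definition commutator_subgroup :: "('a, 'b) monoid_scheme \<Rightarrow> 'a set" where
  "commutator_subgroup G = derived G (carrier G)"

definition center :: "('a, 'b) monoid_scheme \<Rightarrow> 'a set" where
  "center G = {z \<in> carrier G. \<forall>x \<in> carrier G. z \<otimes>\<^bsub>G\<^esub> x = x \<otimes>\<^bsub>G\<^esub> z}"

definition abel_order :: "('a, 'b) monoid_scheme \<Rightarrow> nat" where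
  "abel_order G = card (carrier (G Mod commutator_subgroup G))"

text \<open>The commutator map theta_G : G/Z(G) x G/Z(G) -> G', via representatives.\<close>
definition theta :: "('a, 'b) monoid_scheme \<Rightarrow> 'a set \<Rightarrow> 'a set \<Rightarrow> 'a" where
  "theta G u v = comm G (SOME x. x \<in> u) (SOME y. y \<in> v)"

definition weakly_top :: "('a, 'b) monoid_scheme \<Rightarrow> bool" where
  "weakly_top G \<longleftrightarrow> (\<forall>H. subgroup H G \<and> H \<noteq> carrier G \<longrightarrow>
      abel_order (G\<lparr>carrier := H\<rparr>) \<le> abel_order G)"

definition top_group :: "('a, 'b) monoid_scheme \<Rightarrow> bool" where
  "top_group G \<longleftrightarrow> (\<forall>H. subgroup H G \<and> H \<noteq> carrier G \<longrightarrow>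
      abel_order (G\<lparr>carrier := H\<rparr>) < abel_order G)"

definition isoclinic :: "('a, 'c) monoid_scheme \<Rightarrow> ('b, 'd) monoid_scheme \<Rightarrow> bool" where
  "isoclinic A B \<longleftrightarrow> (\<exists>\<phi> \<psi>.
      \<phi> \<in> iso (A\<lparr>carrier := commutator_subgroup A\<rparr>) (B\<lparr>carrier := commutator_subgroup B\<rparr>) \<and>
      \<psi> \<in> iso (A Mod center A) (B Mod center B) \<and>
      (\<forall>u \<in> carrier (A Mod center A). \<forall>v \<in> carrier (A Mod center A).
          \<phi> (theta A u v) = theta B (\<psi> u) (\<psi> v)))"

end

(*
  Let (phi, psi) be an isoclinism from A to B and H a subgroup of B. Pull H back to the
  subgroup K of A with K/Z(A) = psi^-1(HZ(B)/Z(B)). Commutators only depend on cosets of the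
  centre, so phi maps the derived set of K onto that of H, and hence |K'| = |H'|. Counting
  cosets of the centres gives |H| <= |Z(B)| |K/Z(A)| and |K| = |Z(A)| |K/Z(A)|, whence
  |H/H'| |Z(A)| <= |K/K'| |Z(B)|. The same count for the whole groups is an equality,
  |B/B'| |Z(A)| = |A/A'| |Z(B)|, so the (strict) inequality |K/K'| <= |A/A'| for proper K
  transfers to H. If instead K = A, then H' = B' and |H/H'| < |B/B'| because H is proper.
*)
theory Submission
  imports Defs
begin

lemma center_commute:
  fixes G (structure)
  assumes "z \<in> center G" "a \<in> carrier G"
  shows "z \<otimes> a = a \<otimes> z"
  using assms by (simp add: center_def)

lemma inv_mult_center_mult:
  fixes G (structure)
  assumes "group G" "z \<in> center G" "a \<in> carrier G"
  shows "inv z \<otimes> a \<otimes> z = a"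
proof -
  interpret group G by fact
  have z: "z \<in> carrier G" using assms(2) by (simp add: center_def)
  have "inv z \<otimes> a \<otimes> z = inv z \<otimes> (z \<otimes> a)"
    using z assms(3) by (simp add: m_assoc center_commute[OF assms(2,3)])
  also have "\<dots> = a"
    using z assms(3) by (simp add: m_assoc[symmetric])
  finally show ?thesis .
qed

lemma center_subgroup:
  fixes G (structure)
  assumes "group G"
  shows "subgroup (center G) G"
proof -
  interpret group G by fact
  show ?thesis
  proof (rule subgroupI)
    fix a assume a: "a \<in> center G"
    then have ac: "a \<in> carrier G" by (simp add: center_def)
    have "inv a \<otimes> x = x \<otimes> inv a" if x: "x \<in> carrier G" for x
    proof -
      have "inv a \<otimes> x = inv a \<otimes> x \<otimes> a \<otimes> inv a"
        using ac x by (simp add: m_assoc)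
      also have "\<dots> = x \<otimes> inv a"
        using inv_mult_center_mult[OF assms a x] by simp
      finally show ?thesis .
    qed
    with ac show "inv a \<in> center G" unfolding center_def by blast
  next
    fix a b assume "a \<in> center G" "b \<in> center G"
    moreover from this have ab: "a \<in> carrier G" "b \<in> carrier G"
      by (simp_all add: center_def)
    ultimately have "a \<otimes> b \<otimes> x = x \<otimes> (a \<otimes> b)" if "x \<in> carrier G" for x
      using that ab by (simp add: m_assoc center_commute[of b G x])
        (simp add: m_assoc[symmetric] center_commute[of a G x])
    with ab show "a \<otimes> b \<in> center G"
      by (simp add: center_def)
  qed (auto simp: center_def)
qed

lemma center_normal:
  fixes G (structure)
  assumes "group G"
  shows "center G \<lhd> G"
proof -
  interpret group G by fact
  have "x \<otimes> z \<otimes> inv x \<in> center G" if "x \<in> carrier G" "z \<in> center G" for x z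
  proof -
    have "z \<in> carrier G" using that(2) by (simp add: center_def)
    then show ?thesis
      using that by (simp add: center_commute[OF that(2,1), symmetric] m_assoc)
  qed
  then show ?thesis
    unfolding normal_inv_iff using center_subgroup[OF assms] by blast
qed

lemma comm_mult_center:
  fixes G (structure)
  assumes G: "group G" and x: "x \<in> carrier G" and y: "y \<in> carrier G"
    and z: "z \<in> center G" and w: "w \<in> center G"
  shows "comm G (z \<otimes> x) (w \<otimes> y) = comm G x y"
proof -
  interpret group G by fact
  have zc: "z \<in> carrier G" and wc: "w \<in> carrier G"
    using z w by (simp_all add: center_def)
  have "comm G (z \<otimes> x) (w \<otimes> y) = inv x \<otimes> (inv z \<otimes> (inv y \<otimes> inv w) \<otimes> z) \<otimes> x \<otimes> w \<otimes> y"
    unfolding comm_def using x y zc wc by (simp add: inv_mult_group m_assoc)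
  also have "\<dots> = inv x \<otimes> inv y \<otimes> (inv w \<otimes> x \<otimes> w) \<otimes> y"
    using x y wc by (simp add: inv_mult_center_mult[OF G z] m_assoc)
  also have "\<dots> = comm G x y"
    unfolding comm_def by (simp add: inv_mult_center_mult[OF G w x])
  finally show ?thesis .
qed

lemma theta_rcos:
  fixes G (structure)
  assumes G: "group G" and x: "x \<in> carrier G" and y: "y \<in> carrier G"
  shows "theta G (center G #> x) (center G #> y) = comm G x y"
proof -
  interpret group G by fact
  have "x \<in> center G #> x" "y \<in> center G #> y"
    using rcos_self center_subgroup[OF G] x y by blast+
  then have "(SOME x'. x' \<in> center G #> x) \<in> center G #> x"
    and "(SOME y'. y' \<in> center G #> y) \<in> center G #> y"
    by (metis someI)+
  then obtain z w where "z \<in> center G" "w \<in> center G"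
    and "(SOME x'. x' \<in> center G #> x) = z \<otimes> x" "(SOME y'. y' \<in> center G #> y) = w \<otimes> y"
    unfolding r_coset_def by blast
  then show ?thesis
    unfolding theta_def using comm_mult_center[OF G x y] by simp
qed

lemma derived_set_eq_theta_image:
  fixes G (structure)
  assumes G: "group G" and H: "subgroup H G"
  defines "Q \<equiv> (\<lambda>h. center G #> h) ` H"
  shows "derived_set G H = (\<lambda>(u, v). theta G u v) ` (Q \<times> Q)"
proof
  interpret group G by fact
  show "derived_set G H \<subseteq> (\<lambda>(u, v). theta G u v) ` (Q \<times> Q)"
  proof clarify
    fix h1 h2 assume h: "h1 \<in> H" "h2 \<in> H"
    then have hc: "h1 \<in> carrier G" "h2 \<in> carrier G"
      using subgroup.subset[OF H] by auto
    have "h1 \<otimes> h2 \<otimes> inv h1 \<otimes> inv h2 = theta G (center G #> inv h1) (center G #> inv h2)"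
      using hc by (simp add: theta_rcos[OF G] comm_def)
    moreover have "center G #> inv h1 \<in> Q" "center G #> inv h2 \<in> Q"
      unfolding Q_def using h subgroup.m_inv_closed[OF H] by auto
    ultimately show "h1 \<otimes> h2 \<otimes> inv h1 \<otimes> inv h2 \<in> (\<lambda>(u, v). theta G u v) ` (Q \<times> Q)"
      by force
  qed
  show "(\<lambda>(u, v). theta G u v) ` (Q \<times> Q) \<subseteq> derived_set G H"
  proof
    fix e assume "e \<in> (\<lambda>(u, v). theta G u v) ` (Q \<times> Q)"
    then obtain h1 h2 where h: "h1 \<in> H" "h2 \<in> H"
      and e: "e = theta G (center G #> h1) (center G #> h2)"
      unfolding Q_def by auto
    then have hc: "h1 \<in> carrier G" "h2 \<in> carrier G"
      using subgroup.subset[OF H] by auto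
    have "e = inv h1 \<otimes> inv h2 \<otimes> inv (inv h1) \<otimes> inv (inv h2)"
      using hc by (simp add: e theta_rcos[OF G] comm_def)
    then show "e \<in> derived_set G H"
      using h subgroup.m_inv_closed[OF H] by blast
  qed
qed

lemma (in group) abel_order_mult_card_derived:
  assumes "finite (carrier G)" "subgroup H G"
  shows "abel_order (G\<lparr>carrier := H\<rparr>) * card (derived G H) = card H"
proof -
  interpret H: group "G\<lparr>carrier := H\<rparr>"
    using subgroup_imp_group[OF assms(2)] .
  have "commutator_subgroup (G\<lparr>carrier := H\<rparr>) = derived G H"
    unfolding commutator_subgroup_def using derived_consistent[OF _ assms(2)] by simp
  moreover have "subgroup (derived G H) (G\<lparr>carrier := H\<rparr>)"
    using derived_subgroup_is_normal[OF assms(2)] normal_imp_subgroup by blast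
  ultimately show ?thesis
    using H.lagrange unfolding abel_order_def by (simp add: FactGroup_def order_def)
qed

lemma (in group) card_le_card_mult_card_rcos_image:
  assumes "finite (carrier G)" "subgroup N G" "H \<subseteq> carrier G"
  shows "card H \<le> card N * card ((\<lambda>h. N #> h) ` H)"
proof -
  let ?C = "(\<lambda>h. N #> h) ` H"
  have C: "?C \<subseteq> rcosets N"
    using assms(3) rcosetsI[OF subgroup.subset[OF assms(2)]] by blast
  have "H \<subseteq> \<Union>?C"
    using assms(3) rcos_self[OF _ assms(2)] by blast
  moreover have "\<Union>?C \<subseteq> carrier G"
    using C rcosets_part_G[OF assms(2)] by blast
  ultimately have "card H \<le> card (\<Union>?C)"
    using assms(1) by (meson card_mono finite_subset)
  also have "\<dots> \<le> (\<Sum>c \<in> ?C. card c)"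
    by (rule card_Union_le_sum_card)
  also have "\<dots> = (\<Sum>c \<in> ?C. card N)"
    using C card_rcosets_equal[OF _ subgroup.subset[OF assms(2)]] by (intro sum.cong) auto
  also have "\<dots> = card N * card ?C"
    by simp
  finally show ?thesis .
qed

lemma (in group) card_eq_card_mult_card_rcos_image:
  assumes "finite (carrier G)" "subgroup N G" "subgroup H G" "N \<subseteq> H"
  shows "card H = card N * card ((\<lambda>h. N #> h) ` H)"
proof -
  interpret H: group "G\<lparr>carrier := H\<rparr>"
    using subgroup_imp_group[OF assms(3)] .
  have "rcosets\<^bsub>G\<lparr>carrier := H\<rparr>\<^esub> N = (\<lambda>h. N #> h) ` H"
    unfolding RCOSETS_def r_coset_def by auto
  with H.lagrange[OF subgroup_incl[OF assms(2,3,4)]] show ?thesis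
    by (simp add: order_def mult.commute)
qed

lemma (in group_hom) subgroup_preimage:
  assumes "subgroup S H"
  shows "subgroup {x \<in> carrier G. h x \<in> S} G"
proof -
  interpret S: subgroup S H by fact
  show ?thesis
    by (rule G.subgroupI) (auto intro!: exI[of _ "\<one>\<^bsub>G\<^esub>"])
qed

lemma group_hom_Mod_center:
  assumes "group G"
  shows "group_hom G (G Mod center G) (\<lambda>a. center G #>\<^bsub>G\<^esub> a)"
  using assms normal.r_coset_hom_Mod[OF center_normal[OF assms]]
    normal.factorgroup_is_group[OF center_normal[OF assms]]
  by (simp add: group_hom_def group_hom_axioms_def)

locale isoclinism = A: group A + B: group B
  for A :: "('a, 'c) monoid_scheme" and B :: "('b, 'd) monoid_scheme"
    and \<phi> :: "'a \<Rightarrow> 'b" and \<psi> :: "'a set \<Rightarrow> 'b set" +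
  assumes phi_iso: "\<phi> \<in> iso (A\<lparr>carrier := commutator_subgroup A\<rparr>) (B\<lparr>carrier := commutator_subgroup B\<rparr>)"
    and psi_iso: "\<psi> \<in> iso (A Mod center A) (B Mod center B)"
    and theta_compat: "\<And>u v. u \<in> carrier (A Mod center A) \<Longrightarrow> v \<in> carrier (A Mod center A) \<Longrightarrow>
      \<phi> (theta A u v) = theta B (\<psi> u) (\<psi> v)"

lemma isoclinic_iff_isoclinism:
  assumes "group A" "group B"
  shows "isoclinic A B \<longleftrightarrow> (\<exists>\<phi> \<psi>. isoclinism A B \<phi> \<psi>)"
  using assms by (auto simp: isoclinic_def isoclinism_def isoclinism_axioms_def)

context isoclinism
begin

lemma derived_set_image:
  assumes K: "subgroup K A" and H: "subgroup H B"
    and Q: "\<psi> ` ((\<lambda>a. center A #>\<^bsub>A\<^esub> a) ` K) = (\<lambda>h. center B #>\<^bsub>B\<^esub> h) ` H"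
  shows "\<phi> ` derived_set A K = derived_set B H"
proof -
  let ?QK = "(\<lambda>a. center A #>\<^bsub>A\<^esub> a) ` K"
  have "?QK \<subseteq> carrier (A Mod center A)"
    using subgroup.subset[OF K] by (auto simp: carrier_FactGroup)
  then have "\<phi> ` derived_set A K = (\<lambda>(u, v). theta B (\<psi> u) (\<psi> v)) ` (?QK \<times> ?QK)"
    unfolding derived_set_eq_theta_image[OF A.group_axioms K] image_image
    by (intro image_cong) (auto intro!: theta_compat)
  also have "\<dots> = (\<lambda>(u, v). theta B u v) ` (\<psi> ` ?QK \<times> \<psi> ` ?QK)"
    by force
  also have "\<dots> = derived_set B H"
    unfolding Q derived_set_eq_theta_image[OF B.group_axioms H] ..
  finally show ?thesis .
qed

lemma derived_image:
  assumes K: "subgroup K A" and H: "subgroup H B"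
    and Q: "\<psi> ` ((\<lambda>a. center A #>\<^bsub>A\<^esub> a) ` K) = (\<lambda>h. center B #>\<^bsub>B\<^esub> h) ` H"
  shows "\<phi> ` derived A K = derived B H"
proof -
  let ?A' = "commutator_subgroup A" and ?B' = "commutator_subgroup B"
  have A': "subgroup ?A' A" and B': "subgroup ?B' B"
    unfolding commutator_subgroup_def by (simp_all add: A.derived_is_subgroup B.derived_is_subgroup)
  interpret group_hom "A\<lparr>carrier := ?A'\<rparr>" "B\<lparr>carrier := ?B'\<rparr>" \<phi>
    using phi_iso A.subgroup_imp_group[OF A'] B.subgroup_imp_group[OF B']
    by (simp add: group_hom_def group_hom_axioms_def iso_def)
  have dsA: "derived_set A K \<subseteq> ?A'"
    unfolding commutator_subgroup_def derived_def
    using subgroup.subset[OF K] by (auto intro: generate.incl)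
  have dsB: "derived_set B H \<subseteq> ?B'"
    unfolding commutator_subgroup_def derived_def
    using subgroup.subset[OF H] by (auto intro: generate.incl)
  have "derived B H = generate (B\<lparr>carrier := ?B'\<rparr>) (\<phi> ` derived_set A K)"
    unfolding derived_def derived_set_image[OF K H Q] B.generate_consistent[OF dsB B'] ..
  also have "\<dots> = \<phi> ` derived A K"
    unfolding derived_def generate_img[of "derived_set A K", simplified, OF dsA] A.generate_consistent[OF dsA A'] ..
  finally show ?thesis ..
qed

definition correspondent :: "'b set \<Rightarrow> 'a set" where
  "correspondent H = {a \<in> carrier A. \<psi> (center A #>\<^bsub>A\<^esub> a) \<in> (\<lambda>h. center B #>\<^bsub>B\<^esub> h) ` H}"

lemma psi_hom: "group_hom (A Mod center A) (B Mod center B) \<psi>"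
  using psi_iso normal.factorgroup_is_group[OF center_normal[OF A.group_axioms]]
    normal.factorgroup_is_group[OF center_normal[OF B.group_axioms]]
  by (simp add: group_hom_def group_hom_axioms_def iso_def)

lemma subgroup_correspondent:
  assumes "subgroup H B"
  shows "subgroup (correspondent H) A"
proof -
  have "group_hom A (B Mod center B) (\<psi> \<circ> (\<lambda>a. center A #>\<^bsub>A\<^esub> a))"
    using group_hom_Mod_center[OF A.group_axioms] psi_hom hom_compose
    unfolding group_hom_def group_hom_axioms_def by blast
  moreover have "subgroup ((\<lambda>h. center B #>\<^bsub>B\<^esub> h) ` H) (B Mod center B)"
    using group_hom.subgroup_img_is_subgroup[OF group_hom_Mod_center[OF B.group_axioms] assms] .
  ultimately show ?thesis
    unfolding correspondent_def using group_hom.subgroup_preimage by fastforce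
qed

lemma center_subset_correspondent:
  assumes "subgroup H B"
  shows "center A \<subseteq> correspondent H"
proof
  fix z assume z: "z \<in> center A"
  have "\<psi> (center A #>\<^bsub>A\<^esub> z) = \<one>\<^bsub>B Mod center B\<^esub>"
    using subgroup.rcos_const[OF center_subgroup[OF A.group_axioms] A.group_axioms z]
      group_hom.hom_one[OF psi_hom] by simp
  also have "\<dots> = center B #>\<^bsub>B\<^esub> \<one>\<^bsub>B\<^esub>"
    using subgroup.subset[OF center_subgroup[OF B.group_axioms]] by simp
  finally show "z \<in> correspondent H"
    using z subgroup.one_closed[OF assms] unfolding correspondent_def center_def by blast
qed

lemma rcos_image_correspondent:
  assumes "subgroup H B"
  shows "\<psi> ` ((\<lambda>a. center A #>\<^bsub>A\<^esub> a) ` correspondent H) = (\<lambda>h. center B #>\<^bsub>B\<^esub> h) ` H"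
proof
  show "\<psi> ` ((\<lambda>a. center A #>\<^bsub>A\<^esub> a) ` correspondent H) \<subseteq> (\<lambda>h. center B #>\<^bsub>B\<^esub> h) ` H"
    unfolding correspondent_def by auto
next
  show "(\<lambda>h. center B #>\<^bsub>B\<^esub> h) ` H \<subseteq> \<psi> ` ((\<lambda>a. center A #>\<^bsub>A\<^esub> a) ` correspondent H)"
  proof clarify
    fix h assume "h \<in> H"
    then have "center B #>\<^bsub>B\<^esub> h \<in> carrier (B Mod center B)"
      using subgroup.subset[OF assms] by (auto simp: carrier_FactGroup)
    then have "center B #>\<^bsub>B\<^esub> h \<in> \<psi> ` carrier (A Mod center A)"
      using psi_iso unfolding iso_def bij_betw_def by simp
    then obtain a where a: "a \<in> carrier A" "\<psi> (center A #>\<^bsub>A\<^esub> a) = center B #>\<^bsub>B\<^esub> h"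
      unfolding carrier_FactGroup by auto
    with \<open>h \<in> H\<close> have "a \<in> correspondent H"
      unfolding correspondent_def by auto
    with a show "center B #>\<^bsub>B\<^esub> h \<in> \<psi> ` ((\<lambda>a. center A #>\<^bsub>A\<^esub> a) ` correspondent H)"
      by (metis image_eqI)
  qed
qed

lemma derived_correspondent:
  assumes "subgroup H B"
  shows "\<phi> ` derived A (correspondent H) = derived B H"
  using derived_image[OF subgroup_correspondent[OF assms] assms rcos_image_correspondent[OF assms]] .

lemma card_derived_correspondent:
  assumes "subgroup H B"
  shows "card (derived A (correspondent H)) = card (derived B H)"
proof -
  have "derived A (correspondent H) \<subseteq> commutator_subgroup A"
    unfolding commutator_subgroup_def
    using A.mono_derived subgroup.subset[OF subgroup_correspondent[OF assms]] .
  then have "inj_on \<phi> (derived A (correspondent H))"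
    using phi_iso unfolding iso_def bij_betw_def by (auto intro: inj_on_subset)
  then show ?thesis
    using derived_correspondent[OF assms] card_image by fastforce
qed

lemma correspondent_eq_carrier_imp_derived_eq:
  assumes "subgroup H B" "correspondent H = carrier A"
  shows "derived B H = commutator_subgroup B"
proof -
  have "\<phi> ` commutator_subgroup A = commutator_subgroup B"
    using phi_iso unfolding iso_def bij_betw_def by simp
  then show ?thesis
    using derived_correspondent[OF assms(1)] assms(2) unfolding commutator_subgroup_def by simp
qed

end

locale finite_isoclinism = isoclinism +
  assumes finite_A: "finite (carrier A)" and finite_B: "finite (carrier B)"
begin

lemma card_center_pos: "0 < card (center A)" "0 < card (center B)"
  using subgroup.finite_imp_card_positive center_subgroup finite_A finite_B
    A.group_axioms B.group_axioms by blast+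

lemma abel_order_mult_card_center:
  "abel_order B * card (center A) = abel_order A * card (center B)"
proof -
  let ?A' = "commutator_subgroup A" and ?B' = "commutator_subgroup B"
  have derived: "card ?B' = card ?A'"
    using phi_iso unfolding iso_def by (auto dest: bij_betw_same_card)
  have quotient: "card (rcosets\<^bsub>B\<^esub> center B) = card (rcosets\<^bsub>A\<^esub> center A)"
    using psi_iso unfolding iso_def FactGroup_def by (auto dest: bij_betw_same_card)
  have eA: "abel_order A * card ?A' = card (carrier A)"
    using A.abel_order_mult_card_derived[OF finite_A A.subgroup_self]
    unfolding commutator_subgroup_def by simp
  have eB: "abel_order B * card ?B' = card (carrier B)"
    using B.abel_order_mult_card_derived[OF finite_B B.subgroup_self]
    unfolding commutator_subgroup_def by simp
  have lA: "card (rcosets\<^bsub>A\<^esub> center A) * card (center A) = card (carrier A)"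
    using A.lagrange[OF center_subgroup[OF A.group_axioms]] by (simp add: order_def)
  have lB: "card (rcosets\<^bsub>B\<^esub> center B) * card (center B) = card (carrier B)"
    using B.lagrange[OF center_subgroup[OF B.group_axioms]] by (simp add: order_def)
  have "abel_order B * card (center A) * card ?A' = abel_order B * card ?B' * card (center A)"
    by (simp add: derived ac_simps)
  also have "\<dots> = card (rcosets\<^bsub>A\<^esub> center A) * card (center A) * card (center B)"
    by (simp add: eB flip: lB quotient)
  also have "\<dots> = abel_order A * card (center B) * card ?A'"
    by (simp add: lA flip: eA)
  finally show ?thesis
    using subgroup.finite_imp_card_positive[OF A.derived_is_subgroup[OF order.refl] finite_A]
    unfolding commutator_subgroup_def by simp
qed

lemma card_mult_card_center_le:
  assumes H: "subgroup H B"
  shows "card H * card (center A) \<le> card (correspondent H) * card (center B)"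
proof -
  let ?QK = "(\<lambda>a. center A #>\<^bsub>A\<^esub> a) ` correspondent H"
  let ?QH = "(\<lambda>h. center B #>\<^bsub>B\<^esub> h) ` H"
  have "?QK \<subseteq> carrier (A Mod center A)"
    using subgroup.subset[OF subgroup_correspondent[OF H]] by (auto simp: carrier_FactGroup)
  then have "inj_on \<psi> ?QK"
    using psi_iso unfolding iso_def bij_betw_def by (auto intro: inj_on_subset)
  then have QK_QH: "card ?QK = card ?QH"
    using card_image rcos_image_correspondent[OF H] by metis
  have "card H * card (center A) \<le> card (center B) * card ?QH * card (center A)"
    using B.card_le_card_mult_card_rcos_image[OF finite_B center_subgroup[OF B.group_axioms]
        subgroup.subset[OF H]] by simp
  also have "\<dots> = card (center A) * card ?QK * card (center B)"
    by (simp add: QK_QH ac_simps)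
  also have "\<dots> = card (correspondent H) * card (center B)"
    using A.card_eq_card_mult_card_rcos_image[OF finite_A center_subgroup[OF A.group_axioms]
        subgroup_correspondent[OF H] center_subset_correspondent[OF H]] by simp
  finally show ?thesis .
qed

lemma abel_order_correspondent_bound:
  assumes H: "subgroup H B"
  shows "abel_order (B\<lparr>carrier := H\<rparr>) * card (center A)
    \<le> abel_order (A\<lparr>carrier := correspondent H\<rparr>) * card (center B)"
proof -
  let ?K = "correspondent H"
  have "abel_order (B\<lparr>carrier := H\<rparr>) * card (center A) * card (derived A ?K)
      = card H * card (center A)"
    using B.abel_order_mult_card_derived[OF finite_B H] card_derived_correspondent[OF H]
    by (simp add: ac_simps)
  also have "\<dots> \<le> card ?K * card (center B)"
    using card_mult_card_center_le[OF H] .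
  also have "\<dots> = abel_order (A\<lparr>carrier := ?K\<rparr>) * card (center B) * card (derived A ?K)"
    using A.abel_order_mult_card_derived[OF finite_A subgroup_correspondent[OF H]]
    by (simp add: ac_simps)
  finally show ?thesis
    using subgroup.finite_imp_card_positive[OF A.derived_is_subgroup finite_A]
      subgroup.subset[OF subgroup_correspondent[OF H]] by simp
qed

lemma abel_order_less_if_correspondent_eq_carrier:
  assumes H: "subgroup H B" and "H \<noteq> carrier B" and "correspondent H = carrier A"
  shows "abel_order (B\<lparr>carrier := H\<rparr>) < abel_order B"
proof -
  have "card H < card (carrier B)"
    using assms(2) subgroup.subset[OF H] finite_B by (simp add: psubset_card_mono)
  then have "abel_order (B\<lparr>carrier := H\<rparr>) * card (commutator_subgroup B)
      < abel_order B * card (commutator_subgroup B)"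
    using B.abel_order_mult_card_derived[OF finite_B H]
      B.abel_order_mult_card_derived[OF finite_B B.subgroup_self]
      correspondent_eq_carrier_imp_derived_eq[OF H assms(3)]
    unfolding commutator_subgroup_def by simp
  then show ?thesis
    by simp
qed

lemma weakly_top_transfer:
  assumes "weakly_top A"
  shows "weakly_top B"
  unfolding weakly_top_def
proof clarify
  fix H assume H: "subgroup H B" "H \<noteq> carrier B"
  show "abel_order (B\<lparr>carrier := H\<rparr>) \<le> abel_order B"
  proof (cases "correspondent H = carrier A")
    case True
    with H show ?thesis
      using abel_order_less_if_correspondent_eq_carrier by fastforce
  next
    case False
    with assms have "abel_order (A\<lparr>carrier := correspondent H\<rparr>) \<le> abel_order A"
      unfolding weakly_top_def using subgroup_correspondent[OF H(1)] by blast
    then have "abel_order (B\<lparr>carrier := H\<rparr>) * card (center A) \<le> abel_order B * card (center A)"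
      using abel_order_correspondent_bound[OF H(1)] abel_order_mult_card_center
      by (metis le_trans mult_le_mono1)
    then show ?thesis
      using card_center_pos by simp
  qed
qed

lemma top_group_transfer:
  assumes "top_group A"
  shows "top_group B"
  unfolding top_group_def
proof clarify
  fix H assume H: "subgroup H B" "H \<noteq> carrier B"
  show "abel_order (B\<lparr>carrier := H\<rparr>) < abel_order B"
  proof (cases "correspondent H = carrier A")
    case True
    with H show ?thesis
      using abel_order_less_if_correspondent_eq_carrier by fastforce
  next
    case False
    with assms have "abel_order (A\<lparr>carrier := correspondent H\<rparr>) < abel_order A"
      unfolding top_group_def using subgroup_correspondent[OF H(1)] by blast
    then have "abel_order (B\<lparr>carrier := H\<rparr>) * card (center A) < abel_order B * card (center A)"
      using abel_order_correspondent_bound[OF H(1)] abel_order_mult_card_center card_center_pos(2)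
      by (metis le_less_trans mult_less_cancel2)
    then show ?thesis
      using card_center_pos by simp
  qed
qed

end

theorem theorem1p3:
  fixes A :: "('a, 'c) monoid_scheme" and B :: "('b, 'd) monoid_scheme"
  assumes "group A" and "group B"
    and "finite (carrier A)" and "finite (carrier B)"
    and "isoclinic A B"
  shows "(weakly_top A \<longrightarrow> weakly_top B) \<and> (top_group A \<longrightarrow> top_group B)"
proof -
  from assms obtain \<phi> \<psi> where "isoclinism A B \<phi> \<psi>"
    using isoclinic_iff_isoclinism by blast
  then interpret finite_isoclinism A B \<phi> \<psi>
    using assms(3,4) by (simp add: finite_isoclinism_def finite_isoclinism_axioms_def)
  show ?thesis
    using weakly_top_transfer top_group_transfer by blast
qed

end
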